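(* Assume $\mathcal E$ is stable under pullback and $\mathcal F\subseteq\mathcal E$. Let $c$ be a closure operator on $\mathcal A$ and let $X\in\mathcal X$. If $R$ preserves products with $X$ (i.e. $\rho_{X\times Y}=\rho_X\times\rho_Y$ for every $Y\in\mathcal X$, via the canonical comparison), $\rho_X\in\mathcal E$, and $RX$ is $c$-compact, then $X$ is $c^\rho$-compact.
   Context: Standing setting. $\mathcal X$ and $\mathcal A$ are finitely complete categories; $\mathcal X$ carries a proper factorization system $(\mathcal E,\mathcal M)$ and $\mathcal A$ a proper factorization system $(\mathcal F,\mathcal N)$ (proper: every member of $\mathcal E$, resp. $\mathcal F$, is an epimorphism and every member of $\mathcal M$, resp. $\mathcal N$, is a monomorphism). $\mathcal A$ is a full reflective subcategory of $\mathcal X$ with reflector $R:\mathcal X\to\mathcal A$ and reflection (unit) $\rho_X:X\to RX$; as in the paper's setting, $\mathcal N\subseteq\mathcal M$ and $R\mathcal E\subseteq\mathcal F$. For $X\in\mathcal X$, $\operatorname{sub}X$ is the class $\mathcal M/X$ of $\mathcal M$-morphisms with codomain $X$, preordered by $m\le n$ iff $m=nj$ for some morphism $j$; for $A\in\mathcal A$, $\operatorname{sub}_{\mathcal A}A=\mathcal N/A$ with the same preorder. For $f:X\to Y$ and $m\in\operatorname{sub}X$, the image $f(m)\in\operatorname{sub}Y$ is the $\mathcal M$-part of the $(\mathcal E,\mathcal M)$-factorization of $fm$, and for $n\in\operatorname{sub}Y$ the preimage $f^{-1}(n)\in\operatorname{sub}X$ is the pullback of $n$ along $f$ (analogously in $\mathcal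 A$ using $(\mathcal F,\mathcal N)$). A closure operator $c$ on $\mathcal A$ (with respect to $\mathcal N$) is a family of maps $c_A:\operatorname{sub}_{\mathcal A}A\to\operatorname{sub}_{\mathcal A}A$ ($A\in\mathcal A$) such that $m\le c_A(m)$, $m\le n\Rightarrow c_A(m)\le c_A(n)$, and $f(c_A(m))\le c_B(f(m))$ for every morphism $f:A\to B$ of $\mathcal A$; closure operators on $\mathcal X$ (with respect to $\mathcal M$) are defined likewise. For an arbitrary morphism $g:M\to A$ of $\mathcal A$, write $g(1_M)$ for the $\mathcal N$-part of its $(\mathcal F,\mathcal N)$-factorization and put $c_A(g):=c_A(g(1_M))$. The $R$-initial lift of $c$ is the closure operator $c^\rho$ on $\mathcal X$ given by $c^\rho_X(m)=\rho_X^{-1}(c_{RX}(Rm))$ for $X\in\mathcal X$, $m\in\operatorname{sub}X$. For a closure operator $d$ on a category, an object $X$ is $d$-compact if for every object $Y$ the projection $\pi_Y:X\times Y\to Y$ is $d$-preserving, i.e. $\pi_Y(d_{X\times Y}(m))=d_Y(\pi_Y(m))$ for every subobject $m$ of $X\times Y$ (for $c$-compactness of an object of $\mathcal A$, $Y$ ranges over $\mathcal A$ and subobjects over $\operatorname{sub}_{\mathcal A}$; for $c^\rho$-compactness, over $\mathcal X$ and $\operatorname{sub}$). *)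

theory Defs
  imports Main
begin

record ('o, 'a) cat =
  Obj  :: "'o set"
  Arr  :: "'a set"
  Dom  :: "'a \<Rightarrow> 'o"
  Cod  :: "'a \<Rightarrow> 'o"
  Idt  :: "'o \<Rightarrow> 'a"
  Comp :: "'a \<Rightarrow> 'a \<Rightarrow> 'a"   (* Comp C g f = g o f *)

definition hom :: "('o,'a) cat \<Rightarrow> 'o \<Rightarrow> 'o \<Rightarrow> 'a set" where
  "hom C x y = {f \<in> Arr C. Dom C f = x \<and> Cod C f = y}"

definition is_cat :: "('o,'a) cat \<Rightarrow> bool" where
  "is_cat C \<longleftrightarrow>
     (\<forall>f\<in>Arr C. Dom C f \<in> Obj C \<and> Cod C f \<in> Obj C) \<and>
     (\<forall>x\<in>Obj C. Idt C x \<in> hom C x x) \<and>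
     (\<forall>f\<in>Arr C. \<forall>g\<in>Arr C. Cod C f = Dom C g \<longrightarrow> Comp C g f \<in> hom C (Dom C f) (Cod C g)) \<and>
     (\<forall>f\<in>Arr C. Comp C f (Idt C (Dom C f)) = f \<and> Comp C (Idt C (Cod C f)) f = f) \<and>
     (\<forall>f\<in>Arr C. \<forall>g\<in>Arr C. \<forall>h\<in>Arr C. Cod C f = Dom C g \<and> Cod C g = Dom C h \<longrightarrow>
         Comp C h (Comp C g f) = Comp C (Comp C h g) f)"

definition mono :: "('o,'a) cat \<Rightarrow> 'a \<Rightarrow> bool" where
  "mono C f \<longleftrightarrow> f \<in> Arr C \<and>
     (\<forall>g\<in>Arr C. \<forall>h\<in>Arr C. Cod C g = Dom C f \<and> Cod C h = Dom C f \<and> Dom C g = Dom C h \<and>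
        Comp C f g = Comp C f h \<longrightarrow> g = h)"

definition epi :: "('o,'a) cat \<Rightarrow> 'a \<Rightarrow> bool" where
  "epi C f \<longleftrightarrow> f \<in> Arr C \<and>
     (\<forall>g\<in>Arr C. \<forall>h\<in>Arr C. Dom C g = Cod C f \<and> Dom C h = Cod C f \<and> Cod C g = Cod C h \<and>
        Comp C g f = Comp C h f \<longrightarrow> g = h)"

definition iso :: "('o,'a) cat \<Rightarrow> 'a \<Rightarrow> bool" where
  "iso C f \<longleftrightarrow> f \<in> Arr C \<and> (\<exists>g \<in> hom C (Cod C f) (Dom C f).
     Comp C g f = Idt C (Dom C f) \<and> Comp C f g = Idt C (Cod C f))"

definition is_terminal :: "('o,'a) cat \<Rightarrow> 'o \<Rightarrow> bool" where
  "is_terminal C T \<longleftrightarrow> T \<in> Obj C \<and> (\<forall>Z\<in>Obj C. \<exists>!u. u \<in> hom C Z T)"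

text \<open>\<open>is_pullback C f g p q\<close>: the square \<open>f o p = g o q\<close> is a pullback of the
  cospan \<open>f, g\<close>; so \<open>p\<close> is the pullback of \<open>g\<close> along \<open>f\<close>.\<close>
definition is_pullback :: "('o,'a) cat \<Rightarrow> 'a \<Rightarrow> 'a \<Rightarrow> 'a \<Rightarrow> 'a \<Rightarrow> bool" where
  "is_pullback C f g p q \<longleftrightarrow>
     f \<in> Arr C \<and> g \<in> Arr C \<and> p \<in> Arr C \<and> q \<in> Arr C \<and>
     Cod C f = Cod C g \<and> Cod C p = Dom C f \<and> Cod C q = Dom C g \<and> Dom C p = Dom C q \<and>
     Comp C f p = Comp C g q \<and>
     (\<forall>p'\<in>Arr C. \<forall>q'\<in>Arr C. Cod C p' = Dom C f \<and> Cod C q' = Dom C g \<and> Dom C p' = Dom C q' \<and>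
        Comp C f p' = Comp C g q' \<longrightarrow>
        (\<exists>!u. u \<in> hom C (Dom C p') (Dom C p) \<and> Comp C p u = p' \<and> Comp C q u = q'))"

definition finitely_complete :: "('o,'a) cat \<Rightarrow> bool" where
  "finitely_complete C \<longleftrightarrow> (\<exists>T. is_terminal C T) \<and>
     (\<forall>f\<in>Arr C. \<forall>g\<in>Arr C. Cod C f = Cod C g \<longrightarrow> (\<exists>p q. is_pullback C f g p q))"

definition is_product :: "('o,'a) cat \<Rightarrow> 'o \<Rightarrow> 'a \<Rightarrow> 'a \<Rightarrow> 'o \<Rightarrow> 'o \<Rightarrow> bool" where
  "is_product C P p1 p2 X Y \<longleftrightarrow>
     X \<in> Obj C \<and> Y \<in> Obj C \<and> P \<in> Obj C \<and> p1 \<in> hom C P X \<and> p2 \<in> hom C P Y \<and>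
     (\<forall>Z\<in>Obj C. \<forall>f\<in>hom C Z X. \<forall>g\<in>hom C Z Y.
        \<exists>!u. u \<in> hom C Z P \<and> Comp C p1 u = f \<and> Comp C p2 u = g)"

definition factsys :: "('o,'a) cat \<Rightarrow> 'a set \<Rightarrow> 'a set \<Rightarrow> bool" where
  "factsys C E M \<longleftrightarrow>
     E \<subseteq> Arr C \<and> M \<subseteq> Arr C \<and>
     (\<forall>f. iso C f \<longrightarrow> f \<in> E \<and> f \<in> M) \<and>
     (\<forall>e\<in>E. \<forall>e'\<in>E. Cod C e = Dom C e' \<longrightarrow> Comp C e' e \<in> E) \<and>
     (\<forall>m\<in>M. \<forall>m'\<in>M. Cod C m = Dom C m' \<longrightarrow> Comp C m' m \<in> M) \<and>
     (\<forall>f\<in>Arr C. \<exists>e\<in>E. \<exists>m\<in>M. Cod C e = Dom C m \<and> f = Comp C m e) \<and>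
     (\<forall>e\<in>E. \<forall>m\<in>M. \<forall>u\<in>Arr C. \<forall>v\<in>Arr C.
        Dom C u = Dom C e \<and> Cod C u = Dom C m \<and> Dom C v = Cod C e \<and> Cod C v = Cod C m \<and>
        Comp C v e = Comp C m u \<longrightarrow>
        (\<exists>!d. d \<in> hom C (Cod C e) (Dom C m) \<and> Comp C d e = u \<and> Comp C m d = v))"

definition proper_factsys :: "('o,'a) cat \<Rightarrow> 'a set \<Rightarrow> 'a set \<Rightarrow> bool" where
  "proper_factsys C E M \<longleftrightarrow> factsys C E M \<and> (\<forall>e\<in>E. epi C e) \<and> (\<forall>m\<in>M. mono C m)"

definition pullback_stable :: "('o,'a) cat \<Rightarrow> 'a set \<Rightarrow> bool" where
  "pullback_stable C E \<longleftrightarrow> (\<forall>f e p q. e \<in> E \<and> is_pullback C f e p q \<longrightarrow> p \<in> E)"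

definition sub :: "('o,'a) cat \<Rightarrow> 'a set \<Rightarrow> 'o \<Rightarrow> 'a set" where
  "sub C M X = {m \<in> M. Cod C m = X}"

definition sub_le :: "('o,'a) cat \<Rightarrow> 'a \<Rightarrow> 'a \<Rightarrow> bool" where
  "sub_le C m n \<longleftrightarrow> (\<exists>j\<in>Arr C. Dom C j = Dom C m \<and> Cod C j = Dom C n \<and> m = Comp C n j)"

definition sub_eq :: "('o,'a) cat \<Rightarrow> 'a \<Rightarrow> 'a \<Rightarrow> bool" where
  "sub_eq C m n \<longleftrightarrow> sub_le C m n \<and> sub_le C n m"

definition img :: "('o,'a) cat \<Rightarrow> 'a set \<Rightarrow> 'a set \<Rightarrow> 'a \<Rightarrow> 'a \<Rightarrow> 'a" where
  "img C E M f m = (SOME n. n \<in> M \<and> (\<exists>e\<in>E. Cod C e = Dom C n \<and> Comp C f m = Comp C n e))"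

definition gimg :: "('o,'a) cat \<Rightarrow> 'a set \<Rightarrow> 'a set \<Rightarrow> 'a \<Rightarrow> 'a" where
  "gimg C E M g = img C E M g (Idt C (Dom C g))"

definition preim :: "('o,'a) cat \<Rightarrow> 'a \<Rightarrow> 'a \<Rightarrow> 'a" where
  "preim C f n = (SOME p. \<exists>q. is_pullback C f n p q)"

definition closure_op :: "('o,'a) cat \<Rightarrow> 'a set \<Rightarrow> 'a set \<Rightarrow> ('o \<Rightarrow> 'a \<Rightarrow> 'a) \<Rightarrow> bool" where
  "closure_op C E M c \<longleftrightarrow>
     (\<forall>X\<in>Obj C. \<forall>m\<in>sub C M X.
        c X m \<in> sub C M X \<and> sub_le C m (c X m) \<and>
        (\<forall>n\<in>sub C M X. sub_le C m n \<longrightarrow> sub_le C (c X m) (c X n))) \<and>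
     (\<forall>f\<in>Arr C. \<forall>m\<in>sub C M (Dom C f).
        sub_le C (img C E M f (c (Dom C f) m)) (c (Cod C f) (img C E M f m)))"

definition preserving :: "('o,'a) cat \<Rightarrow> 'a set \<Rightarrow> 'a set \<Rightarrow> ('o \<Rightarrow> 'a \<Rightarrow> 'a) \<Rightarrow> 'a \<Rightarrow> bool" where
  "preserving C E M d p \<longleftrightarrow>
     (\<forall>m\<in>sub C M (Dom C p). sub_eq C (img C E M p (d (Dom C p) m)) (d (Cod C p) (img C E M p m)))"

definition compact :: "('o,'a) cat \<Rightarrow> 'a set \<Rightarrow> 'a set \<Rightarrow> ('o \<Rightarrow> 'a \<Rightarrow> 'a) \<Rightarrow> 'o \<Rightarrow> bool" where
  "compact C E M d X \<longleftrightarrow>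
     (\<forall>Y\<in>Obj C. \<forall>P p1 p2. is_product C P p1 p2 X Y \<longrightarrow> preserving C E M d p2)"

definition full_sub :: "('o,'a) cat \<Rightarrow> 'o set \<Rightarrow> ('o,'a) cat" where
  "full_sub C AO = C\<lparr>Obj := AO, Arr := {f \<in> Arr C. Dom C f \<in> AO \<and> Cod C f \<in> AO}\<rparr>"

definition is_reflection :: "('o,'a) cat \<Rightarrow> 'o set \<Rightarrow> ('o \<Rightarrow> 'o) \<Rightarrow> ('o \<Rightarrow> 'a) \<Rightarrow> bool" where
  "is_reflection C AO RO rho \<longleftrightarrow>
     (\<forall>X\<in>Obj C. RO X \<in> AO \<and> rho X \<in> hom C X (RO X) \<and>
        (\<forall>B\<in>AO. \<forall>f\<in>hom C X B. \<exists>!g. g \<in> hom C (RO X) B \<and> Comp C g (rho X) = f))"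

text \<open>The reflector on morphisms, determined by the unit.\<close>
definition Rarr :: "('o,'a) cat \<Rightarrow> ('o \<Rightarrow> 'o) \<Rightarrow> ('o \<Rightarrow> 'a) \<Rightarrow> 'a \<Rightarrow> 'a" where
  "Rarr C RO rho f = (THE g. g \<in> hom C (RO (Dom C f)) (RO (Cod C f)) \<and>
                              Comp C g (rho (Dom C f)) = Comp C (rho (Cod C f)) f)"

text \<open>\<open>c^rho_X(m) = rho_X^{-1}(c_{RX}(Rm))\<close>, with \<open>c_{RX}(Rm) = c_{RX}((Rm)(1))\<close>.\<close>
definition clift :: "('o,'a) cat \<Rightarrow> 'o set \<Rightarrow> 'a set \<Rightarrow> 'a set \<Rightarrow> ('o \<Rightarrow> 'o) \<Rightarrow> ('o \<Rightarrow> 'a)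
                       \<Rightarrow> ('o \<Rightarrow> 'a \<Rightarrow> 'a) \<Rightarrow> 'o \<Rightarrow> 'a \<Rightarrow> 'a" where
  "clift C AO F N RO rho c X m =
     preim C (rho X) (c (RO X) (gimg (full_sub C AO) F N (Rarr C RO rho m)))"

end

theory Submission
  imports Defs
begin

text \<open>Let \<open>P = X \<times> Y\<close> with projections \<open>p1, p2\<close>, let \<open>m \<in> sub P\<close>, and put
  \<open>k = c\<^sub>R\<^sub>P((R m)(1))\<close>, so that \<open>c\<^sup>\<rho>(m) = \<rho>\<^sub>P\<^sup>-\<^sup>1(k)\<close>.

  First, a Beck-Chevalley property: \<open>p2(\<rho>\<^sub>P\<^sup>-\<^sup>1(k)) = \<rho>\<^sub>Y\<^sup>-\<^sup>1((R p2)(k))\<close> for every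
  \<open>N\<close>-subobject \<open>k\<close> of \<open>RP\<close>. Factor \<open>R p2 \<cdot> k = n' \<cdot> f'\<close> with \<open>f' \<in> F\<close>. The comparison map
  \<open>\<rho>\<^sub>P\<^sup>-\<^sup>1(k) \<rightarrow> \<rho>\<^sub>Y\<^sup>-\<^sup>1(n')\<close> is a pullback of \<open>\<rho>\<^sub>X \<in> E\<close> (this is where \<open>RP = RX \<times> RY\<close> is
  used) followed by a pullback of \<open>f' \<in> F \<subseteq> E\<close>, hence lies in \<open>E\<close>, while \<open>\<rho>\<^sub>Y\<^sup>-\<^sup>1(n') \<in> M\<close>.

  Second, \<open>(R p2)(k) = c\<^sub>R\<^sub>Y((R p2)((R m)(1)))\<close> by compactness of \<open>RX\<close>, and
  \<open>(R p2)((R m)(1)) = (R(p2(m)))(1)\<close> because \<open>R\<close> maps \<open>E\<close> into \<open>F\<close>. Pulling back along \<open>\<rho>\<^sub>Y\<close>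
  gives \<open>p2(c\<^sup>\<rho>(m)) = c\<^sup>\<rho>(p2(m))\<close>.\<close>

locale category =
  fixes C :: "('o, 'a) cat"
  assumes is_cat: "is_cat C"
begin

abbreviation comp (infixr "\<cdot>" 75) where "g \<cdot> f \<equiv> Comp C g f"

lemma in_homI: "f \<in> Arr C \<Longrightarrow> Dom C f = x \<Longrightarrow> Cod C f = y \<Longrightarrow> f \<in> hom C x y"
  by (simp add: hom_def)

lemma in_homD:
  assumes "f \<in> hom C x y"
  shows "f \<in> Arr C" "Dom C f = x" "Cod C f = y"
  using assms by (simp_all add: hom_def)

lemma arr_in_hom: "f \<in> Arr C \<Longrightarrow> f \<in> hom C (Dom C f) (Cod C f)"
  by (simp add: hom_def)

lemma in_hom_Obj:
  assumes "f \<in> hom C x y"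
  shows "x \<in> Obj C" "y \<in> Obj C"
proof -
  have "\<forall>f\<in>Arr C. Dom C f \<in> Obj C \<and> Cod C f \<in> Obj C"
    using is_cat by (simp add: is_cat_def)
  with assms show "x \<in> Obj C" "y \<in> Obj C"
    by (auto simp: hom_def)
qed

lemma id_in_hom: "x \<in> Obj C \<Longrightarrow> Idt C x \<in> hom C x x"
  using is_cat by (simp add: is_cat_def)

lemma comp_in_hom [intro]:
  assumes "f \<in> hom C x y" "g \<in> hom C y z"
  shows "g \<cdot> f \<in> hom C x z"
proof -
  have "\<forall>f\<in>Arr C. \<forall>g\<in>Arr C. Cod C f = Dom C g \<longrightarrow> g \<cdot> f \<in> hom C (Dom C f) (Cod C g)"
    using is_cat by (simp add: is_cat_def)
  with assms show ?thesis by (simp add: hom_def)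
qed

lemma comp_id:
  assumes "f \<in> hom C x y"
  shows comp_id_right: "f \<cdot> Idt C x = f" and comp_id_left: "Idt C y \<cdot> f = f"
proof -
  have "\<forall>f\<in>Arr C. f \<cdot> Idt C (Dom C f) = f \<and> Idt C (Cod C f) \<cdot> f = f"
    using is_cat by (simp add: is_cat_def)
  with assms show "f \<cdot> Idt C x = f" "Idt C y \<cdot> f = f"
    by (auto simp: hom_def)
qed

lemma comp_assoc:
  assumes "f \<in> hom C w x" "g \<in> hom C x y" "h \<in> hom C y z"
  shows "(h \<cdot> g) \<cdot> f = h \<cdot> g \<cdot> f"
proof -
  have "\<forall>f\<in>Arr C. \<forall>g\<in>Arr C. \<forall>h\<in>Arr C. Cod C f = Dom C g \<and> Cod C g = Dom C h \<longrightarrow>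
          h \<cdot> g \<cdot> f = (h \<cdot> g) \<cdot> f"
    using is_cat by (simp add: is_cat_def)
  with assms show ?thesis by (simp add: hom_def)
qed

lemma comp_square_extend:
  assumes "g \<cdot> f = g' \<cdot> f'" "x \<in> hom C w y"
    and "f \<in> hom C y z" "g \<in> hom C z v" "f' \<in> hom C y z'" "g' \<in> hom C z' v"
  shows "g \<cdot> f \<cdot> x = g' \<cdot> f' \<cdot> x"
  using assms comp_assoc[of x w y f z g v] comp_assoc[of x w y f' z' g' v] by simp

lemma comp_factors_in_hom:
  assumes "n \<cdot> e \<in> hom C x y" "e \<in> Arr C" "n \<in> Arr C" "Cod C e = Dom C n"
  shows "e \<in> hom C x (Dom C n)" "n \<in> hom C (Dom C n) y"
proof -
  have "n \<cdot> e \<in> hom C (Dom C e) (Cod C n)"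
    using assms(2-4) comp_in_hom arr_in_hom by metis
  then show "e \<in> hom C x (Dom C n)" "n \<in> hom C (Dom C n) y"
    using assms in_homD by (metis in_homI)+
qed

lemma sub_leI: "j \<in> hom C (Dom C m) (Dom C n) \<Longrightarrow> m = n \<cdot> j \<Longrightarrow> sub_le C m n"
  unfolding sub_le_def hom_def by blast

lemma sub_leE:
  assumes "sub_le C m n"
  obtains j where "j \<in> hom C (Dom C m) (Dom C n)" "m = n \<cdot> j"
  using assms unfolding sub_le_def hom_def by blast

lemma sub_le_trans:
  assumes "sub_le C m n" "sub_le C n k" "k \<in> Arr C"
  shows "sub_le C m k"
proof -
  obtain i where i: "i \<in> hom C (Dom C m) (Dom C n)" "m = n \<cdot> i"
    using assms(1) by (rule sub_leE)
  obtain j where j: "j \<in> hom C (Dom C n) (Dom C k)" "n = k \<cdot> j"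
    using assms(2) by (rule sub_leE)
  have "m = k \<cdot> j \<cdot> i"
    using i j comp_assoc[OF i(1) j(1) arr_in_hom[OF assms(3)]] by simp
  with i j show ?thesis
    by (intro sub_leI[of "j \<cdot> i"]) auto
qed

lemma sub_eq_trans:
  "sub_eq C m n \<Longrightarrow> sub_eq C n k \<Longrightarrow> m \<in> Arr C \<Longrightarrow> k \<in> Arr C \<Longrightarrow> sub_eq C m k"
  unfolding sub_eq_def using sub_le_trans by blast

lemma pullback_square:
  assumes "is_pullback C f g p q"
  shows "p \<in> hom C (Dom C p) (Dom C f)" "q \<in> hom C (Dom C p) (Dom C g)" "f \<cdot> p = g \<cdot> q"
    and "f \<in> hom C (Dom C f) (Cod C f)" "g \<in> hom C (Dom C g) (Cod C f)"
proof -
  have "f \<in> Arr C \<and> g \<in> Arr C \<and> p \<in> Arr C \<and> q \<in> Arr C \<and> Cod C f = Cod C g \<and>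
        Cod C p = Dom C f \<and> Cod C q = Dom C g \<and> Dom C p = Dom C q \<and> f \<cdot> p = g \<cdot> q"
    using assms unfolding is_pullback_def by (elim conjE) (intro conjI)
  then show "p \<in> hom C (Dom C p) (Dom C f)" "q \<in> hom C (Dom C p) (Dom C g)" "f \<cdot> p = g \<cdot> q"
    and "f \<in> hom C (Dom C f) (Cod C f)" "g \<in> hom C (Dom C g) (Cod C f)"
    by (simp_all add: hom_def)
qed

lemma pullback_universal:
  assumes "is_pullback C f g p q"
    and "a \<in> hom C Z (Dom C f)" "b \<in> hom C Z (Dom C g)" "f \<cdot> a = g \<cdot> b"
  shows "\<exists>!u. u \<in> hom C Z (Dom C p) \<and> p \<cdot> u = a \<and> q \<cdot> u = b"
proof -
  have "\<forall>a\<in>Arr C. \<forall>b\<in>Arr C. Cod C a = Dom C f \<and> Cod C b = Dom C g \<and> Dom C a = Dom C b \<and>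
          f \<cdot> a = g \<cdot> b \<longrightarrow> (\<exists>!u. u \<in> hom C (Dom C a) (Dom C p) \<and> p \<cdot> u = a \<and> q \<cdot> u = b)"
    using assms(1) unfolding is_pullback_def by blast
  moreover have "a \<in> Arr C" "b \<in> Arr C" "Cod C a = Dom C f" "Cod C b = Dom C g" "Dom C a = Z" "Dom C b = Z"
    using assms(2,3) by (simp_all add: hom_def)
  ultimately show ?thesis
    using assms(4) by (metis (no_types, lifting))
qed

lemma pullback_lift:
  assumes "is_pullback C f g p q"
    and "a \<in> hom C Z (Dom C f)" "b \<in> hom C Z (Dom C g)" "f \<cdot> a = g \<cdot> b"
  obtains u where "u \<in> hom C Z (Dom C p)" "p \<cdot> u = a" "q \<cdot> u = b"
  using pullback_universal[OF assms] by blast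

lemma pullback_eq:
  assumes "is_pullback C f g p q"
    and "u \<in> hom C Z (Dom C p)" "v \<in> hom C Z (Dom C p)" "p \<cdot> u = p \<cdot> v" "q \<cdot> u = q \<cdot> v"
  shows "u = v"
proof -
  note sq = pullback_square[OF assms(1)]
  have "f \<cdot> p \<cdot> u = g \<cdot> q \<cdot> u"
    using assms(2) sq by (simp add: comp_assoc[symmetric])
  then have "\<exists>!w. w \<in> hom C Z (Dom C p) \<and> p \<cdot> w = p \<cdot> u \<and> q \<cdot> w = q \<cdot> u"
    using assms(2) sq by (intro pullback_universal[OF assms(1)]) auto
  with assms show ?thesis
    by metis
qed

lemma is_pullbackI:
  assumes "f \<in> hom C A D" "g \<in> hom C B D" "p \<in> hom C S A" "q \<in> hom C S B" "f \<cdot> p = g \<cdot> q"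
    and lift: "\<And>Z a b. a \<in> hom C Z A \<Longrightarrow> b \<in> hom C Z B \<Longrightarrow> f \<cdot> a = g \<cdot> b \<Longrightarrow>
                 \<exists>u\<in>hom C Z S. p \<cdot> u = a \<and> q \<cdot> u = b"
    and eq: "\<And>Z u v. u \<in> hom C Z S \<Longrightarrow> v \<in> hom C Z S \<Longrightarrow> p \<cdot> u = p \<cdot> v \<Longrightarrow> q \<cdot> u = q \<cdot> v \<Longrightarrow> u = v"
  shows "is_pullback C f g p q"
  unfolding is_pullback_def
proof (intro conjI ballI impI)
  fix a b
  assume "a \<in> Arr C" "b \<in> Arr C"
    and "Cod C a = Dom C f \<and> Cod C b = Dom C g \<and> Dom C a = Dom C b \<and> f \<cdot> a = g \<cdot> b"
  then have "a \<in> hom C (Dom C a) A" "b \<in> hom C (Dom C a) B" "f \<cdot> a = g \<cdot> b"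
    using assms(1,2) by (auto simp: hom_def)
  then show "\<exists>!u. u \<in> hom C (Dom C a) (Dom C p) \<and> p \<cdot> u = a \<and> q \<cdot> u = b"
    using lift eq assms(3) by (metis in_homD(2))
qed (use assms(1-5) in \<open>simp_all add: hom_def\<close>)

lemma product_proj:
  assumes "is_product C P p1 p2 X Y"
  shows "p1 \<in> hom C P X" "p2 \<in> hom C P Y" "P \<in> Obj C" "X \<in> Obj C" "Y \<in> Obj C"
proof -
  have "X \<in> Obj C \<and> Y \<in> Obj C \<and> P \<in> Obj C \<and> p1 \<in> hom C P X \<and> p2 \<in> hom C P Y"
    using assms unfolding is_product_def by (elim conjE) (intro conjI)
  then show "p1 \<in> hom C P X" "p2 \<in> hom C P Y" "P \<in> Obj C" "X \<in> Obj C" "Y \<in> Obj C"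
    by simp_all
qed

lemma product_universal:
  assumes "is_product C P p1 p2 X Y" "a \<in> hom C Z X" "b \<in> hom C Z Y"
  shows "\<exists>!u. u \<in> hom C Z P \<and> p1 \<cdot> u = a \<and> p2 \<cdot> u = b"
proof -
  have "\<forall>Z\<in>Obj C. \<forall>a\<in>hom C Z X. \<forall>b\<in>hom C Z Y. \<exists>!u. u \<in> hom C Z P \<and> p1 \<cdot> u = a \<and> p2 \<cdot> u = b"
    using assms(1) unfolding is_product_def by (elim conjE)
  then show ?thesis
    using assms(2,3) in_hom_Obj(1)[OF assms(2)] by blast
qed

lemma product_lift:
  assumes "is_product C P p1 p2 X Y" "a \<in> hom C Z X" "b \<in> hom C Z Y"
  obtains u where "u \<in> hom C Z P" "p1 \<cdot> u = a" "p2 \<cdot> u = b"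
  using product_universal[OF assms] by blast

lemma product_eq:
  assumes "is_product C P p1 p2 X Y"
    and "u \<in> hom C Z P" "v \<in> hom C Z P" "p1 \<cdot> u = p1 \<cdot> v" "p2 \<cdot> u = p2 \<cdot> v"
  shows "u = v"
proof -
  have "\<exists>!w. w \<in> hom C Z P \<and> p1 \<cdot> w = p1 \<cdot> u \<and> p2 \<cdot> w = p2 \<cdot> u"
    using assms product_proj[OF assms(1)] by (intro product_universal) auto
  with assms show ?thesis
    by metis
qed

lemma pullback_paste:
  assumes pb: "is_pullback C f g p q" and pb': "is_pullback C q h p' q'"
  shows "is_pullback C f (g \<cdot> h) (p \<cdot> p') q'"
proof -
  note sq = pullback_square[OF pb] and sq' = pullback_square[OF pb']
  have dq: "Dom C q = Dom C p" "Cod C q = Dom C g"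
    using in_homD[OF sq(2)] by simp_all
  have p: "p \<in> hom C (Dom C p) (Dom C f)" and q: "q \<in> hom C (Dom C p) (Dom C g)"
    and f: "f \<in> hom C (Dom C f) (Cod C f)" and g: "g \<in> hom C (Dom C g) (Cod C f)"
    and p': "p' \<in> hom C (Dom C p') (Dom C p)" and q': "q' \<in> hom C (Dom C p') (Dom C h)"
    and h: "h \<in> hom C (Dom C h) (Dom C g)"
    using sq sq' dq by simp_all
  show ?thesis
  proof (rule is_pullbackI[OF f comp_in_hom[OF h g] comp_in_hom[OF p' p] q'])
    have "f \<cdot> p \<cdot> p' = g \<cdot> q \<cdot> p'"
      using comp_square_extend[OF sq(3) p' p f q g] .
    also have "\<dots> = (g \<cdot> h) \<cdot> q'"
      using sq'(3) comp_assoc[OF q' h g] by simp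
    finally show "f \<cdot> p \<cdot> p' = (g \<cdot> h) \<cdot> q'" .
  next
    fix Z a b
    assume a: "a \<in> hom C Z (Dom C f)" and b: "b \<in> hom C Z (Dom C h)"
      and ab: "f \<cdot> a = (g \<cdot> h) \<cdot> b"
    have "f \<cdot> a = g \<cdot> h \<cdot> b"
      using ab comp_assoc[OF b h g] by simp
    then obtain u where u: "u \<in> hom C Z (Dom C p)" "p \<cdot> u = a" "q \<cdot> u = h \<cdot> b"
      using pullback_lift[OF pb a comp_in_hom[OF b h]] by blast
    obtain u' where u': "u' \<in> hom C Z (Dom C p')" "p' \<cdot> u' = u" "q' \<cdot> u' = b"
      using pullback_lift[OF pb', of u Z b] u b dq by auto
    have "(p \<cdot> p') \<cdot> u' = a"
      using comp_assoc[OF u'(1) p' p] u'(2) u(2) by simp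
    with u' show "\<exists>u'\<in>hom C Z (Dom C p'). (p \<cdot> p') \<cdot> u' = a \<and> q' \<cdot> u' = b"
      by blast
  next
    fix Z u v
    assume u: "u \<in> hom C Z (Dom C p')" and v: "v \<in> hom C Z (Dom C p')"
      and pu: "(p \<cdot> p') \<cdot> u = (p \<cdot> p') \<cdot> v" and qu: "q' \<cdot> u = q' \<cdot> v"
    have "q \<cdot> p' \<cdot> u = h \<cdot> q' \<cdot> u"
      using comp_square_extend[OF sq'(3) u p' q q' h] .
    also have "\<dots> = q \<cdot> p' \<cdot> v"
      using comp_square_extend[OF sq'(3) v p' q q' h] qu by simp
    finally have "p' \<cdot> u = p' \<cdot> v"
      using pullback_eq[OF pb comp_in_hom[OF u p'] comp_in_hom[OF v p']] pu
        comp_assoc[OF u p' p] comp_assoc[OF v p' p] by simp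
    then show "u = v"
      using pullback_eq[OF pb' u v] qu by simp
  qed
qed

lemma epi_cancel:
  assumes "epi C e" "e \<in> hom C x y" "g \<in> hom C y z" "h \<in> hom C y z" "g \<cdot> e = h \<cdot> e"
  shows "g = h"
proof -
  have "\<forall>g\<in>Arr C. \<forall>h\<in>Arr C. Dom C g = Cod C e \<and> Dom C h = Cod C e \<and> Cod C g = Cod C h \<and>
          g \<cdot> e = h \<cdot> e \<longrightarrow> g = h"
    using assms(1) unfolding epi_def by blast
  with assms(2-5) show ?thesis
    by (auto simp: hom_def)
qed

lemma iso_if_epi_and_section:
  assumes "epi C e" "e \<in> hom C x y" "r \<in> hom C y x" "r \<cdot> e = Idt C x"
  shows "iso C e"
proof -
  have "(e \<cdot> r) \<cdot> e = Idt C y \<cdot> e"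
    using assms(2-4) comp_assoc[OF assms(2,3,2)] comp_id_right[OF assms(2)] comp_id_left[OF assms(2)]
    by simp
  then have "e \<cdot> r = Idt C y"
    using epi_cancel[OF assms(1,2)] assms(2,3) id_in_hom[OF in_hom_Obj(2)[OF assms(2)]] by blast
  with assms(2-4) show ?thesis
    unfolding iso_def by (auto simp: hom_def)
qed

lemma preim_pullback:
  assumes "finitely_complete C" "f \<in> hom C x z" "n \<in> hom C y z"
  obtains q where "is_pullback C f n (preim C f n) q"
proof -
  have "\<forall>f\<in>Arr C. \<forall>g\<in>Arr C. Cod C f = Cod C g \<longrightarrow> (\<exists>p q. is_pullback C f g p q)"
    using assms(1) unfolding finitely_complete_def by (elim conjE)
  then have "\<exists>p q. is_pullback C f n p q"
    using assms(2,3) by (simp add: hom_def)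
  then show ?thesis
    using that unfolding preim_def by (metis (mono_tags, lifting) someI_ex)
qed

lemma pullback_sub_le:
  assumes "is_pullback C f n p q" "is_pullback C f n' p' q'" "sub_le C n n'"
  shows "sub_le C p p'"
proof -
  note sq = pullback_square[OF assms(1)] and sq' = pullback_square[OF assms(2)]
  obtain j where j: "j \<in> hom C (Dom C n) (Dom C n')" "n = n' \<cdot> j"
    using assms(3) by (rule sub_leE)
  have "f \<cdot> p = n' \<cdot> j \<cdot> q"
    using sq(3) comp_assoc[OF sq(2) j(1) sq'(5)] j(2) by simp
  then obtain u where "u \<in> hom C (Dom C p) (Dom C p')" "p' \<cdot> u = p"
    using pullback_lift[OF assms(2) sq(1) comp_in_hom[OF sq(2) j(1)]] by metis
  then show ?thesis
    by (intro sub_leI[of u]) simp_all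
qed

lemma preim_in_hom:
  assumes "finitely_complete C" "f \<in> hom C x z" "n \<in> hom C y z"
  shows "preim C f n \<in> hom C (Dom C (preim C f n)) x"
  using preim_pullback[OF assms] pullback_square(1) in_homD(2)[OF assms(2)] by metis

lemma preim_sub_eq:
  assumes "finitely_complete C" "f \<in> hom C x z" "n \<in> hom C y z" "n' \<in> hom C y' z" "sub_eq C n n'"
  shows "sub_eq C (preim C f n) (preim C f n')"
  using preim_pullback[OF assms(1,2,3)] preim_pullback[OF assms(1,2,4)] assms(5)
  unfolding sub_eq_def by (meson pullback_sub_le)

end

lemma full_sub_simps [simp]:
  "Obj (full_sub C AO) = AO" "Arr (full_sub C AO) = {f \<in> Arr C. Dom C f \<in> AO \<and> Cod C f \<in> AO}"
  "Dom (full_sub C AO) = Dom C" "Cod (full_sub C AO) = Cod C" "Idt (full_sub C AO) = Idt C"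
  "Comp (full_sub C AO) = Comp C"
  by (simp_all add: full_sub_def)

lemma in_hom_full_sub [simp]: "f \<in> hom (full_sub C AO) x y \<longleftrightarrow> f \<in> hom C x y \<and> x \<in> AO \<and> y \<in> AO"
  by (auto simp: hom_def)

lemma sub_full_sub [simp]: "sub (full_sub C AO) N x = sub C N x"
  by (simp add: sub_def)

lemma img_full_sub [simp]: "img (full_sub C AO) F N = img C F N"
  by (simp add: img_def fun_eq_iff)

lemma sub_eq_full_sub: "sub_eq (full_sub C AO) m n \<Longrightarrow> sub_eq C m n"
  by (auto simp: sub_eq_def sub_le_def)

lemma (in category) is_cat_full_sub:
  assumes "AO \<subseteq> Obj C"
  shows "is_cat (full_sub C AO)"
  unfolding is_cat_def
proof (intro conjI ballI impI)
  fix x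
  assume "x \<in> Obj (full_sub C AO)"
  then show "Idt (full_sub C AO) x \<in> hom (full_sub C AO) x x"
    using assms id_in_hom by auto
next
  fix f g
  assume "f \<in> Arr (full_sub C AO)" "g \<in> Arr (full_sub C AO)"
    and "Cod (full_sub C AO) f = Dom (full_sub C AO) g"
  then have "f \<in> hom C (Dom C f) (Dom C g)" "g \<in> hom C (Dom C g) (Cod C g)"
    "Dom C f \<in> AO" "Cod C g \<in> AO"
    by (auto simp: hom_def)
  then show "Comp (full_sub C AO) g f \<in>
      hom (full_sub C AO) (Dom (full_sub C AO) f) (Cod (full_sub C AO) g)"
    by auto
next
  fix f g h
  assume "f \<in> Arr (full_sub C AO)" "g \<in> Arr (full_sub C AO)" "h \<in> Arr (full_sub C AO)"
    and "Cod (full_sub C AO) f = Dom (full_sub C AO) g \<and> Cod (full_sub C AO) g = Dom (full_sub C AO) h"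
  then have "f \<in> hom C (Dom C f) (Dom C g)" "g \<in> hom C (Dom C g) (Dom C h)"
    "h \<in> hom C (Dom C h) (Cod C h)"
    by (auto simp: hom_def)
  then show "Comp (full_sub C AO) h (Comp (full_sub C AO) g f) =
      Comp (full_sub C AO) (Comp (full_sub C AO) h g) f"
    using comp_assoc by simp
qed (auto intro: comp_id_left comp_id_right arr_in_hom in_hom_Obj)

lemma closure_op_sub:
  assumes "closure_op D E M c" "x \<in> Obj D" "m \<in> sub D M x"
  shows "c x m \<in> sub D M x"
  using assms unfolding closure_op_def by blast

lemma closure_op_sub_eq:
  assumes "closure_op D E M c" "x \<in> Obj D" "m \<in> sub D M x" "n \<in> sub D M x" "sub_eq D m n"
  shows "sub_eq D (c x m) (c x n)"
proof -
  have "\<forall>m\<in>sub D M x. \<forall>n\<in>sub D M x. sub_le D m n \<longrightarrow> sub_le D (c x m) (c x n)"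
    using assms(1,2) unfolding closure_op_def by blast
  with assms(3-5) show ?thesis
    unfolding sub_eq_def by blast
qed

lemma compact_preserving:
  assumes "compact D E M d x" "is_product D P p1 p2 x y" "m \<in> sub D M P"
  shows "sub_eq D (img D E M p2 (d P m)) (d y (img D E M p2 m))"
proof -
  have "y \<in> Obj D" "Dom D p2 = P" "Cod D p2 = y"
    using assms(2) unfolding is_product_def hom_def by simp_all
  with assms show ?thesis
    unfolding compact_def preserving_def by blast
qed

locale factorization_system = category C for C :: "('o, 'a) cat" +
  fixes E M :: "'a set"
  assumes proper_factsys: "proper_factsys C E M"
begin

lemma factsys: "factsys C E M"
  using proper_factsys unfolding proper_factsys_def by blast

lemma E_arr: "e \<in> E \<Longrightarrow> e \<in> Arr C"
  using factsys unfolding factsys_def by blast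

lemma M_arr: "m \<in> M \<Longrightarrow> m \<in> Arr C"
  using factsys unfolding factsys_def by blast

lemma iso_in_M: "iso C f \<Longrightarrow> f \<in> M"
  using factsys unfolding factsys_def by blast

lemma E_epi: "e \<in> E \<Longrightarrow> epi C e"
  using proper_factsys unfolding proper_factsys_def by blast

lemma E_comp:
  assumes "e \<in> E" "e' \<in> E" "e \<in> hom C x y" "e' \<in> hom C y z"
  shows "e' \<cdot> e \<in> E"
proof -
  have "\<forall>e\<in>E. \<forall>e'\<in>E. Cod C e = Dom C e' \<longrightarrow> e' \<cdot> e \<in> E"
    using factsys unfolding factsys_def by (elim conjE)
  with assms show ?thesis
    by (simp add: hom_def)
qed

lemma M_comp:
  assumes "m \<in> M" "m' \<in> M" "m \<in> hom C x y" "m' \<in> hom C y z"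
  shows "m' \<cdot> m \<in> M"
proof -
  have "\<forall>m\<in>M. \<forall>m'\<in>M. Cod C m = Dom C m' \<longrightarrow> m' \<cdot> m \<in> M"
    using factsys unfolding factsys_def by (elim conjE)
  with assms show ?thesis
    by (simp add: hom_def)
qed

lemma sub_in_hom: "m \<in> sub C M x \<Longrightarrow> m \<in> hom C (Dom C m) x"
  using M_arr by (auto simp: sub_def hom_def)

lemma factorization:
  assumes "f \<in> hom C x y"
  obtains e m where "e \<in> E" "m \<in> M" "e \<in> hom C x (Dom C m)" "m \<in> hom C (Dom C m) y" "f = m \<cdot> e"
proof -
  have "\<forall>f\<in>Arr C. \<exists>e\<in>E. \<exists>m\<in>M. Cod C e = Dom C m \<and> f = m \<cdot> e"
    using factsys unfolding factsys_def by blast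
  then obtain e m where "e \<in> E" "m \<in> M" "Cod C e = Dom C m" "f = m \<cdot> e"
    using assms by (auto simp: hom_def)
  moreover have "m \<cdot> e \<in> hom C (Dom C e) (Cod C m)"
    using \<open>e \<in> E\<close> \<open>m \<in> M\<close> \<open>Cod C e = Dom C m\<close> E_arr M_arr by (metis arr_in_hom comp_in_hom)
  ultimately show ?thesis
    using that assms E_arr M_arr by (metis arr_in_hom in_homD(2,3))
qed

lemma diagonal:
  assumes "e \<in> E" "m \<in> M" "e \<in> hom C x y" "m \<in> hom C z w" "u \<in> hom C x z" "v \<in> hom C y w"
    and "v \<cdot> e = m \<cdot> u"
  obtains d where "d \<in> hom C y z" "d \<cdot> e = u" "m \<cdot> d = v"
proof -
  have "\<forall>e\<in>E. \<forall>m\<in>M. \<forall>u\<in>Arr C. \<forall>v\<in>Arr C.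
        Dom C u = Dom C e \<and> Cod C u = Dom C m \<and> Dom C v = Cod C e \<and> Cod C v = Cod C m \<and>
        v \<cdot> e = m \<cdot> u \<longrightarrow> (\<exists>!d. d \<in> hom C (Cod C e) (Dom C m) \<and> d \<cdot> e = u \<and> m \<cdot> d = v)"
    using factsys unfolding factsys_def by (elim conjE)
  with assms that show ?thesis
    unfolding hom_def by (smt (verit, best) mem_Collect_eq)
qed

lemma factorization_sub_le:
  assumes "e \<in> E" "e' \<in> E" "m \<in> M" "m' \<in> M"
    and "e \<in> hom C x (Dom C m)" "e' \<in> hom C x (Dom C m')" "m \<in> hom C (Dom C m) y" "m' \<in> hom C (Dom C m') y"
    and "m \<cdot> e = m' \<cdot> e'"
  shows "sub_le C m m'"
proof -
  obtain d where "d \<in> hom C (Dom C m) (Dom C m')" "m' \<cdot> d = m"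
    using diagonal[OF assms(1,4,5,8,6,7) assms(9)] by blast
  then show ?thesis
    by (intro sub_leI[of d]) simp_all
qed

lemma factorization_unique:
  assumes "e \<in> E" "e' \<in> E" "m \<in> M" "m' \<in> M"
    and "e \<in> hom C x (Dom C m)" "e' \<in> hom C x (Dom C m')" "m \<in> hom C (Dom C m) y" "m' \<in> hom C (Dom C m') y"
    and "m \<cdot> e = m' \<cdot> e'"
  shows "sub_eq C m m'"
  using factorization_sub_le[OF assms] factorization_sub_le[OF assms(2,1,4,3,6,5,8,7) assms(9)[symmetric]]
  unfolding sub_eq_def by blast

lemma img_factorization:
  assumes "f \<in> hom C x y" "m \<in> hom C w x"
  obtains e where "img C E M f m \<in> M" "e \<in> E" "e \<in> hom C w (Dom C (img C E M f m))"
    "img C E M f m \<in> hom C (Dom C (img C E M f m)) y" "f \<cdot> m = img C E M f m \<cdot> e"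
proof -
  obtain e n where "e \<in> E" "n \<in> M" "e \<in> hom C w (Dom C n)" "n \<in> hom C (Dom C n) y" "f \<cdot> m = n \<cdot> e"
    using factorization[OF comp_in_hom[OF assms(2,1)]] .
  then have "\<exists>n. n \<in> M \<and> (\<exists>e\<in>E. Cod C e = Dom C n \<and> f \<cdot> m = n \<cdot> e)"
    by (auto simp: hom_def)
  then have "img C E M f m \<in> M \<and> (\<exists>e\<in>E. Cod C e = Dom C (img C E M f m) \<and> f \<cdot> m = img C E M f m \<cdot> e)"
    unfolding img_def by (rule someI_ex)
  then obtain e' where "img C E M f m \<in> M" "e' \<in> E" "Cod C e' = Dom C (img C E M f m)"
    "f \<cdot> m = img C E M f m \<cdot> e'"
    by blast
  moreover have "f \<cdot> m \<in> hom C w y"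
    using assms by blast
  ultimately show ?thesis
    using that comp_factors_in_hom[of "img C E M f m" e'] E_arr M_arr by simp
qed

lemma img_unique:
  assumes "f \<in> hom C x y" "m \<in> hom C w x" "e \<in> E" "n \<in> M"
    and "e \<in> hom C w (Dom C n)" "n \<in> hom C (Dom C n) y" "f \<cdot> m = n \<cdot> e"
  shows "sub_eq C (img C E M f m) n"
proof -
  obtain e' where "img C E M f m \<in> M" "e' \<in> E" "e' \<in> hom C w (Dom C (img C E M f m))"
    "img C E M f m \<in> hom C (Dom C (img C E M f m)) y" "f \<cdot> m = img C E M f m \<cdot> e'"
    using img_factorization[OF assms(1,2)] .
  then show ?thesis
    using factorization_unique[of e' e "img C E M f m" n w y] assms(3-7) by simp
qed

lemma gimg_factorization:
  assumes "g \<in> hom C x y"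
  obtains e where "gimg C E M g \<in> M" "e \<in> E" "e \<in> hom C x (Dom C (gimg C E M g))"
    "gimg C E M g \<in> hom C (Dom C (gimg C E M g)) y" "g = gimg C E M g \<cdot> e"
proof -
  have "Idt C x \<in> hom C x x"
    using id_in_hom in_hom_Obj(1)[OF assms] by blast
  moreover have "gimg C E M g = img C E M g (Idt C x)"
    using in_homD(2)[OF assms] by (simp add: gimg_def)
  ultimately show ?thesis
    using img_factorization[OF assms] that comp_id_right[OF assms] by metis
qed

lemma img_in_sub:
  assumes "f \<in> hom C x y" "m \<in> hom C w x"
  shows "img C E M f m \<in> sub C M y"
  using img_factorization[OF assms] by (auto simp: sub_def hom_def)

lemma gimg_in_sub:
  assumes "g \<in> hom C x y"
  shows "gimg C E M g \<in> sub C M y"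
  using gimg_factorization[OF assms] by (auto simp: sub_def hom_def)

lemma compact_img_closure:
  assumes clop: "closure_op C E M c" and cmpt: "compact C E M c x"
    and prod: "is_product C P p1 p2 x y"
    and n: "n \<in> sub C M P" and b: "b \<in> sub C M y" and nb: "sub_eq C (img C E M p2 n) b"
  shows "sub_eq C (img C E M p2 (c P n)) (c y b)"
proof -
  have p2: "p2 \<in> hom C P y" and Obj: "P \<in> Obj C" "y \<in> Obj C"
    using product_proj[OF prod] by simp_all
  have "sub_eq C (c y (img C E M p2 n)) (c y b)"
    using closure_op_sub_eq[OF clop Obj(2) img_in_sub[OF p2 sub_in_hom[OF n]] b nb] .
  moreover have "img C E M p2 (c P n) \<in> Arr C" "c y b \<in> Arr C"
    using img_in_sub[OF p2 sub_in_hom[OF closure_op_sub[OF clop Obj(1) n]]]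
      closure_op_sub[OF clop Obj(2) b] M_arr by (auto simp: sub_def)
  ultimately show ?thesis
    using compact_preserving[OF cmpt prod n] sub_eq_trans by blast
qed

lemma M_pullback_stable:
  assumes pb: "is_pullback C f g p q" and "g \<in> M"
  shows "p \<in> M"
proof -
  note sq = pullback_square[OF pb]
  define S where "S = Dom C p"
  have p: "p \<in> hom C S (Dom C f)" and q: "q \<in> hom C S (Dom C g)" and f: "f \<in> hom C (Dom C f) (Cod C f)"
    and g: "g \<in> hom C (Dom C g) (Cod C f)"
    using sq by (simp_all add: S_def)
  obtain e0 m0 where e0: "e0 \<in> E" "e0 \<in> hom C S (Dom C m0)" and m0: "m0 \<in> M" "m0 \<in> hom C (Dom C m0) (Dom C f)"
    and p_eq: "p = m0 \<cdot> e0"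
    using factorization[OF p] by blast
  have "(f \<cdot> m0) \<cdot> e0 = g \<cdot> q"
    using sq(3) comp_assoc[OF e0(2) m0(2) f] p_eq by simp
  then obtain d where d: "d \<in> hom C (Dom C m0) (Dom C g)" "d \<cdot> e0 = q" "g \<cdot> d = f \<cdot> m0"
    using diagonal[OF e0(1) assms(2) e0(2) g q comp_in_hom[OF m0(2) f]] by blast
  obtain w where w: "w \<in> hom C (Dom C m0) S" "p \<cdot> w = m0" "q \<cdot> w = d"
    using pullback_lift[OF pb m0(2) d(1) d(3)[symmetric]] unfolding S_def by blast
  have "w \<cdot> e0 = Idt C S"
  proof (rule pullback_eq[OF pb])
    show "w \<cdot> e0 \<in> hom C S (Dom C p)" "Idt C S \<in> hom C S (Dom C p)"
      using e0(2) w(1) id_in_hom in_hom_Obj(1)[OF p] by (auto simp: S_def)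
    show "p \<cdot> w \<cdot> e0 = p \<cdot> Idt C S" "q \<cdot> w \<cdot> e0 = q \<cdot> Idt C S"
      using comp_assoc[OF e0(2) w(1) p] comp_assoc[OF e0(2) w(1) q] w d(2) p_eq
        comp_id_right[OF p] comp_id_right[OF q] by simp_all
  qed
  then have "e0 \<in> M"
    using iso_in_M iso_if_epi_and_section[OF E_epi[OF e0(1)] e0(2) w(1)] by blast
  then show ?thesis
    using M_comp[OF _ m0(1) e0(2) m0(2)] p_eq by simp
qed

end

locale reflective_subcategory = category C for C :: "('o, 'a) cat" +
  fixes AO :: "'o set" and RO :: "'o \<Rightarrow> 'o" and rho :: "'o \<Rightarrow> 'a"
  assumes AO_Obj: "AO \<subseteq> Obj C" and reflection: "is_reflection C AO RO rho"
begin

abbreviation R :: "'a \<Rightarrow> 'a" where "R \<equiv> Rarr C RO rho"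

sublocale A: category "full_sub C AO"
  using is_cat_full_sub[OF AO_Obj] by unfold_locales

lemma reflectionD:
  assumes "x \<in> Obj C"
  shows "RO x \<in> AO \<and> rho x \<in> hom C x (RO x) \<and>
    (\<forall>B\<in>AO. \<forall>f\<in>hom C x B. \<exists>!g. g \<in> hom C (RO x) B \<and> g \<cdot> rho x = f)"
  using reflection assms unfolding is_reflection_def by (rule bspec)

lemma RO_in_AO: "x \<in> Obj C \<Longrightarrow> RO x \<in> AO"
  using reflectionD by simp

lemma rho_in_hom: "x \<in> Obj C \<Longrightarrow> rho x \<in> hom C x (RO x)"
  using reflectionD by simp

lemma reflection_universal:
  assumes "x \<in> Obj C" "B \<in> AO" "f \<in> hom C x B"
  shows "\<exists>!g. g \<in> hom C (RO x) B \<and> g \<cdot> rho x = f"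
  using reflectionD[OF assms(1)] assms(2,3) by simp

lemma reflection_lift:
  assumes "x \<in> Obj C" "B \<in> AO" "f \<in> hom C x B"
  obtains g where "g \<in> hom C (RO x) B" "g \<cdot> rho x = f"
  using reflection_universal[OF assms] by blast

lemma reflection_eq:
  assumes "x \<in> Obj C" "B \<in> AO" "g \<in> hom C (RO x) B" "h \<in> hom C (RO x) B" "g \<cdot> rho x = h \<cdot> rho x"
  shows "g = h"
proof -
  obtain k where "\<And>y. y \<in> hom C (RO x) B \<and> y \<cdot> rho x = g \<cdot> rho x \<Longrightarrow> y = k"
    using reflection_universal[OF assms(1,2) comp_in_hom[OF rho_in_hom[OF assms(1)] assms(3)]]
    by (elim ex1E) blast
  then show ?thesis
    using assms(3-5) by metis
qed

lemma R_spec: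
  assumes "f \<in> hom C x y"
  shows R_in_hom: "R f \<in> hom C (RO x) (RO y)" and R_natural: "R f \<cdot> rho x = rho y \<cdot> f"
proof -
  have y: "y \<in> Obj C"
    using in_hom_Obj(2)[OF assms] .
  have "\<exists>!g. g \<in> hom C (RO x) (RO y) \<and> g \<cdot> rho x = rho y \<cdot> f"
    using reflection_universal[OF in_hom_Obj(1)[OF assms] RO_in_AO[OF y]] assms rho_in_hom[OF y] by blast
  then have "R f \<in> hom C (RO x) (RO y) \<and> R f \<cdot> rho x = rho y \<cdot> f"
    unfolding Rarr_def in_homD(2,3)[OF assms] by (rule theI')
  then show "R f \<in> hom C (RO x) (RO y)" "R f \<cdot> rho x = rho y \<cdot> f"
    by simp_all
qed

lemma R_comp:
  assumes f: "f \<in> hom C x y" and g: "g \<in> hom C y z"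
  shows "R (g \<cdot> f) = R g \<cdot> R f"
proof (rule reflection_eq)
  show "x \<in> Obj C" "RO z \<in> AO"
    using in_hom_Obj[OF f] in_hom_Obj[OF g] RO_in_AO by simp_all
  show "R (g \<cdot> f) \<in> hom C (RO x) (RO z)" "R g \<cdot> R f \<in> hom C (RO x) (RO z)"
    using R_in_hom f g by blast+
  have "(R g \<cdot> R f) \<cdot> rho x = R g \<cdot> rho y \<cdot> f"
    using comp_assoc[OF rho_in_hom R_in_hom[OF f] R_in_hom[OF g]] R_natural[OF f] in_hom_Obj(1)[OF f]
    by simp
  also have "\<dots> = rho z \<cdot> g \<cdot> f"
    using comp_square_extend[OF R_natural[OF g] f rho_in_hom R_in_hom[OF g] g rho_in_hom]
      in_hom_Obj[OF g] by simp
  finally show "R (g \<cdot> f) \<cdot> rho x = (R g \<cdot> R f) \<cdot> rho x"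
    using R_natural[OF comp_in_hom[OF f g]] by simp
qed

text \<open>Here \<open>Z\<close> need not lie in \<open>AO\<close>; both maps factor through the unit \<open>rho Z\<close>.\<close>

lemma reflected_product_eq:
  assumes prod: "is_product (full_sub C AO) RP \<pi>1 \<pi>2 RX RY"
    and z: "z1 \<in> hom C Z RP" "z2 \<in> hom C Z RP" and eq: "\<pi>1 \<cdot> z1 = \<pi>1 \<cdot> z2" "\<pi>2 \<cdot> z1 = \<pi>2 \<cdot> z2"
  shows "z1 = z2"
proof -
  have \<pi>1: "\<pi>1 \<in> hom C RP RX" and \<pi>2: "\<pi>2 \<in> hom C RP RY" and AO: "RP \<in> AO" "RX \<in> AO" "RY \<in> AO"
    using A.product_proj[OF prod] by simp_all
  have Z: "Z \<in> Obj C"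
    using in_hom_Obj(1)[OF z(1)] .
  obtain g1 where g1: "g1 \<in> hom C (RO Z) RP" "g1 \<cdot> rho Z = z1"
    using reflection_lift[OF Z AO(1) z(1)] .
  obtain g2 where g2: "g2 \<in> hom C (RO Z) RP" "g2 \<cdot> rho Z = z2"
    using reflection_lift[OF Z AO(1) z(2)] .
  have "(\<pi>1 \<cdot> g1) \<cdot> rho Z = (\<pi>1 \<cdot> g2) \<cdot> rho Z" "(\<pi>2 \<cdot> g1) \<cdot> rho Z = (\<pi>2 \<cdot> g2) \<cdot> rho Z"
    using comp_assoc[OF rho_in_hom[OF Z] g1(1)] comp_assoc[OF rho_in_hom[OF Z] g2(1)] \<pi>1 \<pi>2 g1(2) g2(2) eq
    by simp_all
  then have "\<pi>1 \<cdot> g1 = \<pi>1 \<cdot> g2" "\<pi>2 \<cdot> g1 = \<pi>2 \<cdot> g2"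
    using reflection_eq[OF Z AO(2)] reflection_eq[OF Z AO(3)] g1(1) g2(1) \<pi>1 \<pi>2 by blast+
  then have "g1 = g2"
    using A.product_eq[OF prod] g1(1) g2(1) AO RO_in_AO[OF Z] by simp
  then show ?thesis
    using g1(2) g2(2) by simp
qed

context
  fixes P p1 p2 X Y K k s s' w w' u
  assumes prod: "is_product C P p1 p2 X Y"
    and Rprod: "is_product (full_sub C AO) (RO P) (R p1) (R p2) (RO X) (RO Y)"
    and k: "k \<in> hom C K (RO P)"
    and pbs: "is_pullback C (rho P) k s s'"
    and pbw: "is_pullback C (rho Y) (R p2 \<cdot> k) w w'"
    and u: "u \<in> hom C (Dom C s) (Dom C w)" "w \<cdot> u = p2 \<cdot> s" "w' \<cdot> u = s'"
begin

private lemma in_hom: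
  shows p1: "p1 \<in> hom C P X" and p2: "p2 \<in> hom C P Y"
    and rP: "rho P \<in> hom C P (RO P)" and rX: "rho X \<in> hom C X (RO X)" and rY: "rho Y \<in> hom C Y (RO Y)"
    and s: "s \<in> hom C (Dom C s) P" and s': "s' \<in> hom C (Dom C s) K"
    and w: "w \<in> hom C (Dom C w) Y" and w': "w' \<in> hom C (Dom C w) K"
proof -
  show p1: "p1 \<in> hom C P X" and p2: "p2 \<in> hom C P Y"
    and rP: "rho P \<in> hom C P (RO P)" and rX: "rho X \<in> hom C X (RO X)" and rY: "rho Y \<in> hom C Y (RO Y)"
    using product_proj[OF prod] rho_in_hom by simp_all
  show "s \<in> hom C (Dom C s) P" "s' \<in> hom C (Dom C s) K"
    using pullback_square(1,2)[OF pbs] in_homD(2)[OF rP] in_homD(2)[OF k] by simp_all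
  show "w \<in> hom C (Dom C w) Y" "w' \<in> hom C (Dom C w) K"
    using pullback_square(1,2)[OF pbw] in_homD(2)[OF rY] in_homD(2)[OF comp_in_hom[OF k R_in_hom[OF p2]]]
    by simp_all
qed

lemma reflected_product_pullback_lift:
  assumes a: "a \<in> hom C Z (Dom C w)" and b: "b \<in> hom C Z X"
    and ab: "(R p1 \<cdot> k \<cdot> w') \<cdot> a = rho X \<cdot> b"
  obtains v where "v \<in> hom C Z (Dom C s)" "u \<cdot> v = a" "(p1 \<cdot> s) \<cdot> v = b"
proof -
  note Rp1 = R_in_hom[OF p1] and Rp2 = R_in_hom[OF p2] and w'a = comp_in_hom[OF a w']
  obtain z where z: "z \<in> hom C Z P" "p1 \<cdot> z = b" "p2 \<cdot> z = w \<cdot> a"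
    using product_lift[OF prod b comp_in_hom[OF a w]] .
  have "rho P \<cdot> z = k \<cdot> w' \<cdot> a"
  proof (rule reflected_product_eq[OF Rprod comp_in_hom[OF z(1) rP] comp_in_hom[OF w'a k]])
    show "R p1 \<cdot> rho P \<cdot> z = R p1 \<cdot> k \<cdot> w' \<cdot> a"
      using comp_square_extend[OF R_natural[OF p1] z(1) rP Rp1 p1 rX] z(2) ab
        comp_assoc[OF a comp_in_hom[OF w' k] Rp1] comp_assoc[OF a w' k] by simp
    show "R p2 \<cdot> rho P \<cdot> z = R p2 \<cdot> k \<cdot> w' \<cdot> a"
      using comp_square_extend[OF R_natural[OF p2] z(1) rP Rp2 p2 rY] z(3)
        comp_square_extend[OF pullback_square(3)[OF pbw] a w rY w' comp_in_hom[OF k Rp2]]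
        comp_assoc[OF w'a k Rp2] by simp
  qed
  then obtain v where v: "v \<in> hom C Z (Dom C s)" "s \<cdot> v = z" "s' \<cdot> v = w' \<cdot> a"
    using pullback_lift[OF pbs, of z Z "w' \<cdot> a"] z(1) w'a in_homD(2)[OF rP] in_homD(2)[OF k] by auto
  have "u \<cdot> v = a"
  proof (rule pullback_eq[OF pbw comp_in_hom[OF v(1) u(1)] a])
    show "w \<cdot> u \<cdot> v = w \<cdot> a" "w' \<cdot> u \<cdot> v = w' \<cdot> a"
      using comp_assoc[OF v(1) u(1) w, symmetric] comp_assoc[OF v(1) u(1) w', symmetric]
        comp_assoc[OF v(1) s p2] u(2,3) v(2,3) z(3) by simp_all
  qed
  moreover have "(p1 \<cdot> s) \<cdot> v = b"
    using comp_assoc[OF v(1) s p1] v(2) z(2) by simp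
  ultimately show ?thesis
    using that v(1) by blast
qed

lemma reflected_product_pullback: "is_pullback C (R p1 \<cdot> k \<cdot> w') (rho X) u (p1 \<cdot> s)"
proof (rule is_pullbackI[OF comp_in_hom[OF comp_in_hom[OF w' k] R_in_hom[OF p1]] rX u(1) comp_in_hom[OF s p1]])
  have "(R p1 \<cdot> k \<cdot> w') \<cdot> u = R p1 \<cdot> rho P \<cdot> s"
    using comp_assoc[OF u(1) comp_in_hom[OF w' k] R_in_hom[OF p1]] comp_assoc[OF u(1) w' k] u(3)
      pullback_square(3)[OF pbs] by simp
  also have "\<dots> = rho X \<cdot> p1 \<cdot> s"
    using comp_square_extend[OF R_natural[OF p1] s rP R_in_hom[OF p1] p1 rX] .
  finally show "(R p1 \<cdot> k \<cdot> w') \<cdot> u = rho X \<cdot> p1 \<cdot> s" .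
next
  fix Z a b
  assume "a \<in> hom C Z (Dom C w)" "b \<in> hom C Z X" "(R p1 \<cdot> k \<cdot> w') \<cdot> a = rho X \<cdot> b"
  then show "\<exists>v\<in>hom C Z (Dom C s). u \<cdot> v = a \<and> (p1 \<cdot> s) \<cdot> v = b"
    by (metis reflected_product_pullback_lift)
next
  fix Z v1 v2
  assume v: "v1 \<in> hom C Z (Dom C s)" "v2 \<in> hom C Z (Dom C s)" and uv: "u \<cdot> v1 = u \<cdot> v2"
    and pv: "(p1 \<cdot> s) \<cdot> v1 = (p1 \<cdot> s) \<cdot> v2"
  have "p2 \<cdot> s \<cdot> v1 = p2 \<cdot> s \<cdot> v2"
    using comp_assoc[OF v(1) u(1) w] comp_assoc[OF v(2) u(1) w] comp_assoc[OF v(1) s p2]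
      comp_assoc[OF v(2) s p2] u(2) uv by metis
  then have "s \<cdot> v1 = s \<cdot> v2"
    using product_eq[OF prod comp_in_hom[OF v(1) s] comp_in_hom[OF v(2) s]] pv
      comp_assoc[OF v(1) s p1] comp_assoc[OF v(2) s p1] by simp
  moreover have "s' \<cdot> v1 = s' \<cdot> v2"
    using comp_assoc[OF v(1) u(1) w'] comp_assoc[OF v(2) u(1) w'] u(3) uv by metis
  ultimately show "v1 = v2"
    using pullback_eq[OF pbs] v by simp
qed

end

end

locale reflective_factorization_systems =
  factorization_system C E M + reflective_subcategory C AO RO rho
  for C :: "('o, 'a) cat" and E M :: "'a set" and AO :: "'o set" and RO rho +
  fixes F N :: "'a set"
  assumes proper_factsys_A: "proper_factsys (full_sub C AO) F N"
    and N_sub_M: "N \<subseteq> M"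
    and R_E_sub_F: "\<forall>e\<in>E. Rarr C RO rho e \<in> F"
    and F_sub_E: "F \<subseteq> E"
    and E_pullback_stable: "pullback_stable C E"
    and finitely_complete: "finitely_complete C"
begin

sublocale A: factorization_system "full_sub C AO" F N
  by unfold_locales (rule proper_factsys_A)

lemma R_in_hom_A: "f \<in> hom C x y \<Longrightarrow> R f \<in> hom (full_sub C AO) (RO x) (RO y)"
  using R_in_hom in_hom_Obj RO_in_AO by simp

lemma N_sub_in_hom: "n \<in> sub C N x \<Longrightarrow> n \<in> hom C (Dom C n) x \<and> Dom C n \<in> AO \<and> x \<in> AO"
  using A.sub_in_hom by simp

text \<open>That is, \<open>(R f)((R m)(1)) = (R (f(m)))(1)\<close>; it holds because \<open>R\<close> maps the \<open>E\<close>-part of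
  the factorization of \<open>f \<cdot> m\<close> into \<open>F\<close>.\<close>

lemma R_img:
  assumes f: "f \<in> hom C x y" and m: "m \<in> hom C w x"
  shows "sub_eq (full_sub C AO) (img C F N (R f) (gimg (full_sub C AO) F N (R m)))
           (gimg (full_sub C AO) F N (R (img C E M f m)))"
proof -
  define n where "n = gimg (full_sub C AO) F N (R m)"
  define a where "a = img C F N (R f) n"
  define m2 where "m2 = img C E M f m"
  define b where "b = gimg (full_sub C AO) F N (R m2)"
  have AO: "RO w \<in> AO" "RO y \<in> AO" "RO x \<in> AO"
    using in_hom_Obj[OF m] in_hom_Obj[OF f] RO_in_AO by simp_all
  obtain e0 where n: "n \<in> N" "n \<in> hom C (Dom C n) (RO x)" "Dom C n \<in> AO"
    and e0: "e0 \<in> F" "e0 \<in> hom C (RO w) (Dom C n)" and Rm: "R m = n \<cdot> e0"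
    using A.gimg_factorization[OF R_in_hom_A[OF m]] unfolding n_def by auto
  obtain fa where a: "a \<in> N" "a \<in> hom C (Dom C a) (RO y)" "Dom C a \<in> AO"
    and fa: "fa \<in> F" "fa \<in> hom C (Dom C n) (Dom C a)" and Rf: "R f \<cdot> n = a \<cdot> fa"
    using A.img_factorization[OF R_in_hom_A[OF f], of n "Dom C n"] n AO(3) unfolding a_def by auto
  obtain e2 where m2: "m2 \<in> hom C (Dom C m2) y" and e2: "e2 \<in> E" "e2 \<in> hom C w (Dom C m2)"
    and fm: "f \<cdot> m = m2 \<cdot> e2"
    using img_factorization[OF f m] unfolding m2_def by blast
  obtain fb where b: "b \<in> N" "b \<in> hom C (Dom C b) (RO y)" "Dom C b \<in> AO"
    and fb: "fb \<in> F" "fb \<in> hom C (RO (Dom C m2)) (Dom C b)" and Rm2: "R m2 = b \<cdot> fb"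
    using A.gimg_factorization[OF R_in_hom_A[OF m2]] unfolding b_def by auto
  have Re2: "R e2 \<in> F" "R e2 \<in> hom C (RO w) (RO (Dom C m2))"
    using R_E_sub_F e2 R_in_hom by blast+
  have "a \<cdot> fa \<cdot> e0 = R f \<cdot> R m"
    using comp_assoc[OF e0(2) fa(2) a(2)] comp_assoc[OF e0(2) n(2) R_in_hom[OF f]] Rf Rm by simp
  also have "\<dots> = R m2 \<cdot> R e2"
    using R_comp[OF m f] R_comp[OF e2(2) m2] fm by simp
  also have "\<dots> = b \<cdot> fb \<cdot> R e2"
    using comp_assoc[OF Re2(2) fb(2) b(2)] Rm2 by simp
  finally have "a \<cdot> fa \<cdot> e0 = b \<cdot> fb \<cdot> R e2" .
  moreover have "fa \<cdot> e0 \<in> F" "fb \<cdot> R e2 \<in> F"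
    using A.E_comp[of e0 fa "RO w" "Dom C n" "Dom C a"] A.E_comp[of "R e2" fb "RO w" "RO (Dom C m2)" "Dom C b"]
      e0 fa fb Re2 n(3) a(3) b(3) AO(1) RO_in_AO[OF in_hom_Obj(1)[OF m2]] by auto
  ultimately have "sub_eq (full_sub C AO) a b"
    using A.factorization_unique[of "fa \<cdot> e0" "fb \<cdot> R e2" a b "RO w" "RO y"]
      e0 fa fb Re2 a b AO by (auto intro: comp_in_hom)
  then show ?thesis
    unfolding a_def n_def b_def m2_def .
qed

lemma preim_comparison_in_E:
  assumes prod: "is_product C P p1 p2 X Y"
    and Rprod: "is_product (full_sub C AO) (RO P) (R p1) (R p2) (RO X) (RO Y)"
    and rhoX: "rho X \<in> E" and k: "k \<in> hom C K (RO P)" and pbs: "is_pullback C (rho P) k s s'"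
    and f': "f' \<in> F" "f' \<in> hom C K (Dom C n')" and Rp2k: "R p2 \<cdot> k = n' \<cdot> f'"
    and pbq: "is_pullback C (rho Y) n' q q'"
  obtains t where "t \<in> E" "t \<in> hom C (Dom C s) (Dom C q)" "p2 \<cdot> s = q \<cdot> t"
proof -
  have p2: "p2 \<in> hom C P Y" and Obj: "P \<in> Obj C" "Y \<in> Obj C"
    using product_proj[OF prod] by simp_all
  note rP = rho_in_hom[OF Obj(1)] and rY = rho_in_hom[OF Obj(2)] and Rp2 = R_in_hom[OF p2]
  have q: "q \<in> hom C (Dom C q) Y" and q': "q' \<in> hom C (Dom C q) (Dom C n')"
    using pullback_square(1,2)[OF pbq] in_homD(2)[OF rY] by simp_all
  have s: "s \<in> hom C (Dom C s) P" and s': "s' \<in> hom C (Dom C s) K"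
    using pullback_square(1,2)[OF pbs] in_homD(2)[OF rP] in_homD(2)[OF k] by simp_all
  obtain w2 where pbw: "is_pullback C q' f' (preim C q' f') w2"
    using preim_pullback[OF finitely_complete q' f'(2)] .
  define w1 where "w1 = preim C q' f'"
  have w1: "w1 \<in> E" "w1 \<in> hom C (Dom C w1) (Dom C q)"
    using E_pullback_stable F_sub_E f'(1) pbw pullback_square(1)[OF pbw] in_homD(2)[OF q']
    unfolding pullback_stable_def w1_def by auto
  have pbw': "is_pullback C (rho Y) (R p2 \<cdot> k) (q \<cdot> w1) w2"
    using pullback_paste[OF pbq pbw] Rp2k unfolding w1_def by simp
  have "rho Y \<cdot> p2 \<cdot> s = R p2 \<cdot> rho P \<cdot> s"
    using comp_square_extend[OF R_natural[OF p2] s rP Rp2 p2 rY] by simp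
  also have "\<dots> = (R p2 \<cdot> k) \<cdot> s'"
    using pullback_square(3)[OF pbs] comp_assoc[OF s' k Rp2] by simp
  finally obtain u where u: "u \<in> hom C (Dom C s) (Dom C (q \<cdot> w1))" "(q \<cdot> w1) \<cdot> u = p2 \<cdot> s" "w2 \<cdot> u = s'"
    using pullback_lift[OF pbw', of "p2 \<cdot> s" "Dom C s" s'] comp_in_hom[OF s p2] s' in_homD(2)[OF rY]
      in_homD(2)[OF comp_in_hom[OF k Rp2]] by auto
  have "u \<in> E"
    using reflected_product_pullback[OF prod Rprod k pbs pbw' u] E_pullback_stable rhoX
    unfolding pullback_stable_def by blast
  have u': "u \<in> hom C (Dom C s) (Dom C w1)"
    using u(1) in_homD(2)[OF comp_in_hom[OF w1(2) q]] by simp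
  show ?thesis
  proof
    show "w1 \<cdot> u \<in> E" "w1 \<cdot> u \<in> hom C (Dom C s) (Dom C q)"
      using E_comp[OF \<open>u \<in> E\<close> w1(1) u' w1(2)] comp_in_hom[OF u' w1(2)] by simp_all
    show "p2 \<cdot> s = q \<cdot> w1 \<cdot> u"
      using u(2) comp_assoc[OF u' w1(2) q] by simp
  qed
qed

lemma img_preim_reflection:
  assumes prod: "is_product C P p1 p2 X Y"
    and Rprod: "is_product (full_sub C AO) (RO P) (R p1) (R p2) (RO X) (RO Y)"
    and rhoX: "rho X \<in> E" and k: "k \<in> sub C N (RO P)"
  shows "sub_eq C (img C E M p2 (preim C (rho P) k)) (preim C (rho Y) (img C F N (R p2) k))"
proof -
  define n' where "n' = img C F N (R p2) k"
  have p2: "p2 \<in> hom C P Y" and Obj: "P \<in> Obj C" "Y \<in> Obj C"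
    using product_proj[OF prod] by simp_all
  note rP = rho_in_hom[OF Obj(1)] and rY = rho_in_hom[OF Obj(2)]
  have kh: "k \<in> hom C (Dom C k) (RO P)" "Dom C k \<in> AO" "RO P \<in> AO"
    using N_sub_in_hom[OF k] by simp_all
  obtain s' where pbs: "is_pullback C (rho P) k (preim C (rho P) k) s'"
    using preim_pullback[OF finitely_complete rP kh(1)] .
  obtain f' where n': "n' \<in> N" "n' \<in> hom C (Dom C n') (RO Y)"
    and f': "f' \<in> F" "f' \<in> hom C (Dom C k) (Dom C n')" and Rp2k: "R p2 \<cdot> k = n' \<cdot> f'"
    using A.img_factorization[OF R_in_hom_A[OF p2], of k "Dom C k"] kh unfolding n'_def by auto
  obtain q' where pbq: "is_pullback C (rho Y) n' (preim C (rho Y) n') q'"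
    using preim_pullback[OF finitely_complete rY n'(2)] .
  obtain t where "t \<in> E" "t \<in> hom C (Dom C (preim C (rho P) k)) (Dom C (preim C (rho Y) n'))"
    "p2 \<cdot> preim C (rho P) k = preim C (rho Y) n' \<cdot> t"
    using preim_comparison_in_E[OF prod Rprod rhoX kh(1) pbs f' Rp2k pbq] .
  moreover have "preim C (rho Y) n' \<in> M"
    using M_pullback_stable[OF pbq] n'(1) N_sub_M by blast
  moreover have "preim C (rho P) k \<in> hom C (Dom C (preim C (rho P) k)) P"
    "preim C (rho Y) n' \<in> hom C (Dom C (preim C (rho Y) n')) Y"
    using preim_in_hom[OF finitely_complete rP kh(1)] preim_in_hom[OF finitely_complete rY n'(2)] .
  ultimately show ?thesis
    using img_unique[OF p2] unfolding n'_def by blast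
qed

lemma img_clift:
  assumes clop: "closure_op (full_sub C AO) F N c" and cmpt: "compact (full_sub C AO) F N c (RO X)"
    and prod: "is_product C P p1 p2 X Y"
    and Rprod: "is_product (full_sub C AO) (RO P) (R p1) (R p2) (RO X) (RO Y)"
    and rhoX: "rho X \<in> E" and m: "m \<in> sub C M P"
  shows "sub_eq C (img C E M p2 (clift C AO F N RO rho c P m))
           (clift C AO F N RO rho c Y (img C E M p2 m))"
proof -
  define n b where "n = gimg (full_sub C AO) F N (R m)"
    and "b = gimg (full_sub C AO) F N (R (img C E M p2 m))"
  define k where "k = c (RO P) n"
  have p2: "p2 \<in> hom C P Y" and Obj: "P \<in> Obj C" "Y \<in> Obj C"
    using product_proj[OF prod] by simp_all
  note rP = rho_in_hom[OF Obj(1)] and rY = rho_in_hom[OF Obj(2)]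
  have AO: "RO P \<in> AO" "RO Y \<in> AO"
    using Obj RO_in_AO by simp_all
  have n: "n \<in> sub C N (RO P)"
    using A.gimg_in_sub[OF R_in_hom_A[OF sub_in_hom[OF m]]] unfolding n_def by simp
  have b: "b \<in> sub C N (RO Y)"
    using A.gimg_in_sub[OF R_in_hom_A[OF sub_in_hom[OF img_in_sub[OF p2 sub_in_hom[OF m]]]]]
    unfolding b_def by simp
  have k: "k \<in> sub C N (RO P)"
    using closure_op_sub[OF clop] n AO unfolding k_def by simp
  have a: "img C F N (R p2) k \<in> sub C N (RO Y)"
    using A.img_in_sub[OF R_in_hom_A[OF p2], of k "Dom C k"] N_sub_in_hom[OF k] AO by simp
  have cb: "c (RO Y) b \<in> sub C N (RO Y)"
    using closure_op_sub[OF clop, of "RO Y" b] b AO by simp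
  have "sub_eq (full_sub C AO) (img C F N (R p2) k) (c (RO Y) b)"
    using A.compact_img_closure[OF clop cmpt Rprod, of n b] R_img[OF p2 sub_in_hom[OF m]] n b
    unfolding k_def n_def b_def by simp
  then have "sub_eq C (preim C (rho Y) (img C F N (R p2) k)) (preim C (rho Y) (c (RO Y) b))"
    using preim_sub_eq[OF finitely_complete rY conjunct1[OF N_sub_in_hom[OF a]]
        conjunct1[OF N_sub_in_hom[OF cb]] sub_eq_full_sub] by blast
  moreover have "sub_eq C (img C E M p2 (preim C (rho P) k)) (preim C (rho Y) (img C F N (R p2) k))"
    using img_preim_reflection[OF prod Rprod rhoX k] .
  moreover have "img C E M p2 (preim C (rho P) k) \<in> Arr C"
    using M_arr img_in_sub[OF p2 preim_in_hom[OF finitely_complete rP]] N_sub_in_hom[OF k]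
    by (auto simp: sub_def)
  moreover have "preim C (rho Y) (c (RO Y) b) \<in> Arr C"
    using in_homD(1)[OF preim_in_hom[OF finitely_complete rY conjunct1[OF N_sub_in_hom[OF cb]]]] .
  ultimately have "sub_eq C (img C E M p2 (preim C (rho P) k)) (preim C (rho Y) (c (RO Y) b))"
    using sub_eq_trans by blast
  then show ?thesis
    unfolding clift_def k_def n_def b_def .
qed

lemma compact_clift:
  assumes clop: "closure_op (full_sub C AO) F N c"
    and Rprod: "\<forall>Y\<in>Obj C. \<forall>P p1 p2. is_product C P p1 p2 X Y \<longrightarrow>
                  is_product (full_sub C AO) (RO P) (R p1) (R p2) (RO X) (RO Y)"
    and rhoX: "rho X \<in> E" and cmpt: "compact (full_sub C AO) F N c (RO X)"
  shows "compact C E M (clift C AO F N RO rho c) X"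
  unfolding compact_def preserving_def
proof (intro ballI allI impI)
  fix Y P p1 p2 m
  assume Y: "Y \<in> Obj C" and prod: "is_product C P p1 p2 X Y" and m: "m \<in> sub C M (Dom C p2)"
  have p2: "Dom C p2 = P" "Cod C p2 = Y"
    using in_homD[OF product_proj(2)[OF prod]] by simp_all
  show "sub_eq C (img C E M p2 (clift C AO F N RO rho c (Dom C p2) m))
      (clift C AO F N RO rho c (Cod C p2) (img C E M p2 m))"
    using img_clift[OF clop cmpt prod Rprod[rule_format, OF Y prod] rhoX] m unfolding p2 .
qed

end

theorem theorem2p7:
  fixes C :: "('o, 'a) cat" and AO :: "'o set"
    and E M F N :: "'a set"
    and RO :: "'o \<Rightarrow> 'o" and rho :: "'o \<Rightarrow> 'a"
    and c :: "'o \<Rightarrow> 'a \<Rightarrow> 'a" and X :: 'o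
  assumes catX: "is_cat C" and fcX: "finitely_complete C"
    and fsX: "proper_factsys C E M"
    and AOsub: "AO \<subseteq> Obj C"
    and fcA: "finitely_complete (full_sub C AO)"
    and fsA: "proper_factsys (full_sub C AO) F N"
    and refl: "is_reflection C AO RO rho"
    and NM: "N \<subseteq> M"
    and RE: "\<forall>e\<in>E. Rarr C RO rho e \<in> F"
    and Estab: "pullback_stable C E"
    and FE: "F \<subseteq> E"
    and clop: "closure_op (full_sub C AO) F N c"
    and XObj: "X \<in> Obj C"
    and Rprod: "\<forall>Y\<in>Obj C. \<forall>P p1 p2. is_product C P p1 p2 X Y \<longrightarrow>
                  is_product (full_sub C AO) (RO P) (Rarr C RO rho p1) (Rarr C RO rho p2) (RO X) (RO Y)"
    and rhoE: "rho X \<in> E"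
    and cmpt: "compact (full_sub C AO) F N c (RO X)"
  shows "compact C E M (clift C AO F N RO rho c) X"
proof -
  interpret reflective_factorization_systems C E M AO RO rho F N
    by unfold_locales (fact catX fsX AOsub refl fsA NM RE FE Estab fcX)+
  show ?thesis
    using compact_clift[OF clop Rprod rhoE cmpt] .
qed

end
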